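(* For any theory $\Gamma$ and any consistent set $T$ of explicit literals: $\langle T,T\rangle$ is an equilibrium model of $\Gamma$ if and only if $T$ is a $\subseteq$-minimal model of $\Gamma^T_+=\{\varphi^T_+\mid\varphi\in\Gamma\}$, i.e., $T$ classically satisfies every formula of $\Gamma^T_+$ and no consistent set $H\subsetneq T$ does.
   Context: Fix a set $\mathit{At}$ of atoms. An explicit literal is $p$ or $\sim p$; a set of explicit literals is consistent if it never contains both $p$ and $\sim p$. Formulas: $\varphi ::= p\mid\bot\mid\varphi\wedge\varphi\mid\varphi\vee\varphi\mid\varphi\to\varphi\mid\sim\varphi$ with $\neg\varphi:=\varphi\to\bot$, $\top:=\neg\bot$; a theory is a set of formulas. Classical satisfaction/falsification by a consistent set $T$: $T\not\models\bot$, $T=\!\!|\;\bot$; $T\models p$ iff $p\in T$, $T=\!\!|\;p$ iff $\sim p\in T$; $\wedge$: satisfied iff both, falsified iff at least one falsified; $\vee$: satisfied iff at least one, falsified iff both falsified; $T\models\sim\varphi$ iff $T=\!\!|\;\varphi$, $T=\!\!|\;\sim\varphi$ iff $T\models\varphi$; $T\models\varphi\to\psi$ iff $T\not\models\varphi$ or $T\models\psi$, $T=\!\!|\;\varphi\to\psi$ iff $T\models\varphi$ and $T=\!\!|\;\psi$. ${\cal X}_5$-interpretations: pairs $\langle H,T\rangle$ of consistent sets of explicit literals with $H\subseteq T$, with $\langle H,T\rangle\not\models\bot$, $=\!\!|\;\bot$; $\models p$ iff $p\in H$, $=\!\!|\;p$ iff $\sim p\in H$; $\wedge,\vee,\sim$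 as in the classical clauses with $\langle H,T\rangle$ in place of $T$; $\langle H,T\rangle\models\varphi\to\psi$ iff (i) $\langle H,T\rangle\not\models\varphi$ or $\langle H,T\rangle\models\psi$ and (ii) $\langle T,T\rangle\not\models\varphi$ or $\langle T,T\rangle\models\psi$; $\langle H,T\rangle=\!\!|\;\varphi\to\psi$ iff $\langle T,T\rangle\models\varphi$ and $\langle H,T\rangle=\!\!|\;\psi$. $\langle T,T\rangle$ is an equilibrium model of $\Gamma$ if it satisfies every formula of $\Gamma$ and no $\langle H,T\rangle$ with $H\subsetneq T$ does. Transformations $\varphi^T_+$, $\varphi^T_-$ (clauses for $\neg\alpha$ take priority over those for $\to$): $\varphi^T_+=\bot$ if $T\not\models\varphi$; otherwise $p^T_+=p$; $(\alpha\otimes\beta)^T_+=\alpha^T_+\otimes\beta^T_+$ for $\otimes\in\{\wedge,\vee\}$; $(\alpha\to\beta)^T_+=\neg(\alpha^T_+)\vee\beta^T_+$; $(\neg\alpha)^T_+=\neg(\alpha^T_+)$; $(\sim\alpha)^T_+=\sim(\alpha^T_-)$. $\varphi^T_-=\top$ if $T$ does not falsify $\varphi$; otherwise $p^T_-=p$; $\bot^T_-=\bot$; $(\alpha\otimes\beta)^T_-=\alpha^T_-\otimes\beta^T_-$; $(\alpha\to\beta)^T_-=\beta^T_-$; $(\neg\alpha)^T_-=\bot$; $(\sim\alpha)^T_-=\sim(\alpha^T_+)$. *)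

theory Defs
  imports Main
begin

datatype 'a lit = Pos 'a | Neg 'a

datatype 'a fm = Atom 'a | Bot | And "'a fm" "'a fm" | Or "'a fm" "'a fm"
  | Imp "'a fm" "'a fm" | Snot "'a fm"

definition Neg_fm :: "'a fm \<Rightarrow> 'a fm" where "Neg_fm \<phi> = Imp \<phi> Bot"
definition Top :: "'a fm" where "Top = Neg_fm Bot"

definition consistent :: "'a lit set \<Rightarrow> bool" where
  "consistent S \<longleftrightarrow> (\<forall>p. \<not> (Pos p \<in> S \<and> Neg p \<in> S))"

text \<open>Classical satisfaction (True) / falsification (False) by a set T.\<close>
fun csat :: "bool \<Rightarrow> 'a lit set \<Rightarrow> 'a fm \<Rightarrow> bool" where
  "csat True T Bot = False"
| "csat False T Bot = True"
| "csat True T (Atom p) = (Pos p \<in> T)"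
| "csat False T (Atom p) = (Neg p \<in> T)"
| "csat True T (And a b) = (csat True T a \<and> csat True T b)"
| "csat False T (And a b) = (csat False T a \<or> csat False T b)"
| "csat True T (Or a b) = (csat True T a \<or> csat True T b)"
| "csat False T (Or a b) = (csat False T a \<and> csat False T b)"
| "csat True T (Snot a) = csat False T a"
| "csat False T (Snot a) = csat True T a"
| "csat True T (Imp a b) = (\<not> csat True T a \<or> csat True T b)"
| "csat False T (Imp a b) = (csat True T a \<and> csat False T b)"

text \<open>X5 satisfaction (True) / falsification (False) by the pair (H,T).\<close>
fun xsat :: "bool \<Rightarrow> 'a lit set \<Rightarrow> 'a lit set \<Rightarrow> 'a fm \<Rightarrow> bool" where
  "xsat True H T Bot = False"
| "xsat False H T Bot = True"
| "xsat True H T (Atom p) = (Pos p \<in> H)"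
| "xsat False H T (Atom p) = (Neg p \<in> H)"
| "xsat True H T (And a b) = (xsat True H T a \<and> xsat True H T b)"
| "xsat False H T (And a b) = (xsat False H T a \<or> xsat False H T b)"
| "xsat True H T (Or a b) = (xsat True H T a \<or> xsat True H T b)"
| "xsat False H T (Or a b) = (xsat False H T a \<and> xsat False H T b)"
| "xsat True H T (Snot a) = xsat False H T a"
| "xsat False H T (Snot a) = xsat True H T a"
| "xsat True H T (Imp a b) = ((\<not> xsat True H T a \<or> xsat True H T b)
                              \<and> (\<not> xsat True T T a \<or> xsat True T T b))"
| "xsat False H T (Imp a b) = (xsat True T T a \<and> xsat False H T b)"

definition x5_interp :: "'a lit set \<Rightarrow> 'a lit set \<Rightarrow> bool" where
  "x5_interp H T \<longleftrightarrow> consistent H \<and> consistent T \<and> H \<subseteq> T"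

definition equilibrium_model :: "'a fm set \<Rightarrow> 'a lit set \<Rightarrow> bool" where
  "equilibrium_model \<Gamma> T \<longleftrightarrow> x5_interp T T \<and> (\<forall>\<phi>\<in>\<Gamma>. xsat True T T \<phi>)
     \<and> \<not> (\<exists>H. H \<subset> T \<and> x5_interp H T \<and> (\<forall>\<phi>\<in>\<Gamma>. xsat True H T \<phi>))"

text \<open>Transformations; True = plus, False = minus. The clauses for a negation
  Imp a Bot take priority over those for Imp.\<close>
fun tr :: "bool \<Rightarrow> 'a lit set \<Rightarrow> 'a fm \<Rightarrow> 'a fm" where
  "tr True T \<phi> = (if \<not> csat True T \<phi> then Bot else (case \<phi> of
       Atom p \<Rightarrow> Atom p
     | Bot \<Rightarrow> Bot
     | And a b \<Rightarrow> And (tr True T a) (tr True T b)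
     | Or a b \<Rightarrow> Or (tr True T a) (tr True T b)
     | Imp a Bot \<Rightarrow> Neg_fm (tr True T a)
     | Imp a b \<Rightarrow> Or (Neg_fm (tr True T a)) (tr True T b)
     | Snot a \<Rightarrow> Snot (tr False T a)))"
| "tr False T \<phi> = (if \<not> csat False T \<phi> then Top else (case \<phi> of
       Atom p \<Rightarrow> Atom p
     | Bot \<Rightarrow> Bot
     | And a b \<Rightarrow> And (tr False T a) (tr False T b)
     | Or a b \<Rightarrow> Or (tr False T a) (tr False T b)
     | Imp a Bot \<Rightarrow> Bot
     | Imp a b \<Rightarrow> tr False T b
     | Snot a \<Rightarrow> Snot (tr True T a)))"

definition plus_theory :: "'a fm set \<Rightarrow> 'a lit set \<Rightarrow> 'a fm set" where
  "plus_theory \<Gamma> T = (\<lambda>\<phi>. tr True T \<phi>) ` \<Gamma>"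

end

theory Submission
  imports Defs
begin

text \<open>Satisfaction in \<open>\<langle>H,T\<rangle>\<close> is persistent: whatever \<open>\<langle>H,T\<rangle>\<close> satisfies or
  falsifies, \<open>T\<close> does classically. So the guards that replace \<open>\<phi>\<^sup>T\<^sub>+\<close> by \<open>\<bottom>\<close>
  and \<open>\<phi>\<^sup>T\<^sub>-\<close> by \<open>\<top>\<close> only discard formulas that \<open>\<langle>H,T\<rangle>\<close> cannot satisfy
  (falsify) anyway, and a structural induction shows that \<open>\<langle>H,T\<rangle>\<close> satisfies
  (falsifies) \<open>\<phi>\<close> exactly when \<open>H\<close> classically satisfies \<open>\<phi>\<^sup>T\<^sub>+\<close> (falsifies \<open>\<phi>\<^sup>T\<^sub>-\<close>).
  Taking \<open>H = T\<close> and \<open>H \<subset> T\<close> turns equilibrium into minimality.\<close>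

declare tr.simps [simp del]

lemma xsat_self: "xsat b T T \<phi> \<longleftrightarrow> csat b T \<phi>"
  by (induction \<phi> arbitrary: b) (case_tac b; simp)+

lemma xsat_persistent:
  assumes "H \<subseteq> T" and "xsat b H T \<phi>"
  shows "csat b T \<phi>"
proof -
  have "xsat b T T \<phi>"
    using assms by (induction \<phi> arbitrary: b) (case_tac b; auto)+
  then show ?thesis
    by (simp add: xsat_self)
qed

lemma tr_Imp_non_Bot:
  assumes "c \<noteq> Bot"
  shows "tr True T (Imp a c) =
      (if csat True T (Imp a c) then Or (Neg_fm (tr True T a)) (tr True T c) else Bot)"
    and "tr False T (Imp a c) = (if csat False T (Imp a c) then tr False T c else Top)"
  using assms by (subst tr.simps; cases c; simp)+

lemma xsat_iff_csat_tr:
  assumes "H \<subseteq> T"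
  shows "xsat b H T \<phi> \<longleftrightarrow> csat b H (tr b T \<phi>)"
proof (induction \<phi> arbitrary: b)
  case (Atom p)
  show ?case
    using assms by (cases b) (auto simp: tr.simps[of T "Atom p"] Top_def Neg_fm_def)
next
  case Bot
  show ?case
    by (cases b) (simp_all add: tr.simps[of T Bot])
next
  case (And a c)
  show ?case
    using And xsat_persistent[OF assms]
    by (cases b) (auto simp: tr.simps[of T "And a c"] Top_def Neg_fm_def)
next
  case (Or a c)
  show ?case
    using Or xsat_persistent[OF assms]
    by (cases b) (auto simp: tr.simps[of T "Or a c"] Top_def Neg_fm_def)
next
  case (Imp a c)
  show ?case
  proof (cases "c = Bot")
    case True
    then show ?thesis
      using Imp.IH(1) xsat_persistent[OF assms]
      by (cases b) (auto simp: tr.simps[of T "Imp a Bot"] Top_def Neg_fm_def xsat_self)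
  next
    case False
    then show ?thesis
      using Imp.IH xsat_persistent[OF assms]
      by (cases b) (auto simp: tr_Imp_non_Bot Top_def Neg_fm_def xsat_self)
  qed
next
  case (Snot a)
  show ?case
    using Snot xsat_persistent[OF assms]
    by (cases b) (auto simp: tr.simps[of T "Snot a"] Top_def Neg_fm_def)
qed

lemma xsat_theory_iff_plus_theory:
  assumes "H \<subseteq> T"
  shows "(\<forall>\<phi>\<in>\<Gamma>. xsat True H T \<phi>) \<longleftrightarrow> (\<forall>\<psi>\<in>plus_theory \<Gamma> T. csat True H \<psi>)"
  using xsat_iff_csat_tr[OF assms] by (simp add: plus_theory_def)

theorem corollary3:
  fixes \<Gamma> :: "'a fm set" and T :: "'a lit set"
  assumes "consistent T"
  shows "equilibrium_model \<Gamma> T \<longleftrightarrow>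
    ((\<forall>\<psi>\<in>plus_theory \<Gamma> T. csat True T \<psi>) \<and>
     \<not> (\<exists>H. H \<subset> T \<and> consistent H \<and> (\<forall>\<psi>\<in>plus_theory \<Gamma> T. csat True H \<psi>)))"
proof -
  have "x5_interp H T \<and> (\<forall>\<phi>\<in>\<Gamma>. xsat True H T \<phi>) \<longleftrightarrow>
        consistent H \<and> (\<forall>\<psi>\<in>plus_theory \<Gamma> T. csat True H \<psi>)" if "H \<subseteq> T" for H
    using assms that xsat_theory_iff_plus_theory[OF that] by (auto simp: x5_interp_def)
  then have smaller_models:
    "(\<exists>H. H \<subset> T \<and> x5_interp H T \<and> (\<forall>\<phi>\<in>\<Gamma>. xsat True H T \<phi>)) \<longleftrightarrow>
     (\<exists>H. H \<subset> T \<and> consistent H \<and> (\<forall>\<psi>\<in>plus_theory \<Gamma> T. csat True H \<psi>))"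
    by (meson psubset_imp_subset)
  show ?thesis
    unfolding equilibrium_model_def smaller_models
    using assms xsat_theory_iff_plus_theory[of T T \<Gamma>] by (simp add: x5_interp_def)
qed

end
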